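(* Let $(A,B,Z,T)$ be a Hopf-Galois system over a field $k$. Then the bialgebras $A$ and $B$ are Hopf algebras (i.e. admit antipodes).
   Context: All tensor products are over a field $k$; $m_X$, $u_X$ denote multiplication and unit of an algebra $X$, $\Delta_X,\varepsilon_X$ comultiplication and counit of a bialgebra $X$. A Hopf-Galois system consists of four non-zero $k$-algebras $(A,B,Z,T)$ such that: (HG1) $A$ and $B$ are bialgebras; (HG2) $Z$ is an $A$-$B$-bicomodule algebra, with left $A$-coaction $\alpha:Z\to A\otimes Z$ and right $B$-coaction $\beta:Z\to Z\otimes B$; (HG3) there are algebra morphisms $\gamma:A\to Z\otimes T$ and $\delta:B\to T\otimes Z$ such that $(\gamma\otimes 1_Z)\circ\alpha=(1_Z\otimes\delta)\circ\beta$, $(\alpha\otimes 1_T)\circ\gamma=(1_A\otimes\gamma)\circ\Delta_A$, and $(1_T\otimes\beta)\circ\delta=(\delta\otimes 1_B)\circ\Delta_B$; (HG4) there is a linear map $S:T\to Z$ such that $m_Z\circ(1_Z\otimes S)\circ\gamma=u_Z\circ\varepsilon_A$ and $m_Z\circ(S\otimes 1_Z)\circ\delta=u_Z\circ\varepsilon_B$. *)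

theory Defs
  imports Main
begin

text \<open>
  Model of vector spaces over a field k: every k-vector space has a basis, so it is
  (up to isomorphism) the space of finitely supported functions  I \<rightarrow> k  for a basis
  type I.  A k-linear map from the space with basis 'i to the space with basis 'j
  is given by the images of the basis vectors: f :: 'i \<Rightarrow> 'j \<Rightarrow> 'k, where f i is
  a finitely supported function (condition lmap).  The tensor product of the spaces
  with bases 'i and 'j is the space with basis 'i \<times> 'j; the ground field k itself
  is the space with basis unit.
\<close>

definition lmap :: "('i \<Rightarrow> 'j \<Rightarrow> 'k::zero) \<Rightarrow> bool" where
  "lmap f \<longleftrightarrow> (\<forall>i. finite {j. f i j \<noteq> 0})"

text \<open>Composition  g \<circ> f  (first f, then g).\<close>
definition lcomp :: "('j \<Rightarrow> 'l \<Rightarrow> 'k::comm_semiring_1) \<Rightarrow> ('i \<Rightarrow> 'j \<Rightarrow> 'k) \<Rightarrow> 'i \<Rightarrow> 'l \<Rightarrow> 'k"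
  (infixr "\<circ>\<^sub>L" 55) where
  "g \<circ>\<^sub>L f = (\<lambda>i l. \<Sum>j\<in>{j. f i j \<noteq> 0}. f i j * g j l)"

definition ltensor :: "('i \<Rightarrow> 'j \<Rightarrow> 'k::comm_semiring_1) \<Rightarrow> ('i2 \<Rightarrow> 'j2 \<Rightarrow> 'k) \<Rightarrow> ('i \<times> 'i2) \<Rightarrow> ('j \<times> 'j2) \<Rightarrow> 'k"
  (infixr "\<otimes>\<^sub>L" 60) where
  "f \<otimes>\<^sub>L g = (\<lambda>(i, i') (j, j'). f i j * g i' j')"

definition lbasis :: "('i \<Rightarrow> 'j) \<Rightarrow> 'i \<Rightarrow> 'j \<Rightarrow> 'k::comm_semiring_1" where
  "lbasis h = (\<lambda>i j. if h i = j then 1 else 0)"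

definition lid :: "'i \<Rightarrow> 'i \<Rightarrow> 'k::comm_semiring_1" where
  "lid = lbasis id"

definition lassoc :: "(('a \<times> 'b) \<times> 'c) \<Rightarrow> ('a \<times> ('b \<times> 'c)) \<Rightarrow> 'k::comm_semiring_1" where
  "lassoc = lbasis (\<lambda>((a, b), c). (a, (b, c)))"

definition lunitor :: "(unit \<times> 'a) \<Rightarrow> 'a \<Rightarrow> 'k::comm_semiring_1" where
  "lunitor = lbasis snd"
definition runitor :: "('a \<times> unit) \<Rightarrow> 'a \<Rightarrow> 'k::comm_semiring_1" where
  "runitor = lbasis fst"
definition lunitor_inv :: "'a \<Rightarrow> (unit \<times> 'a) \<Rightarrow> 'k::comm_semiring_1" where
  "lunitor_inv = lbasis (\<lambda>a. ((), a))"
definition runitor_inv :: "'a \<Rightarrow> ('a \<times> unit) \<Rightarrow> 'k::comm_semiring_1" where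
  "runitor_inv = lbasis (\<lambda>a. (a, ()))"

definition is_algebra :: "('a \<times> 'a \<Rightarrow> 'a \<Rightarrow> 'k::field) \<Rightarrow> (unit \<Rightarrow> 'a \<Rightarrow> 'k) \<Rightarrow> bool" where
  "is_algebra m u \<longleftrightarrow> lmap m \<and> lmap u
     \<and> m \<circ>\<^sub>L (m \<otimes>\<^sub>L lid) = m \<circ>\<^sub>L (lid \<otimes>\<^sub>L m) \<circ>\<^sub>L lassoc
     \<and> m \<circ>\<^sub>L (u \<otimes>\<^sub>L lid) = lunitor
     \<and> m \<circ>\<^sub>L (lid \<otimes>\<^sub>L u) = runitor"

definition nonzero_algebra :: "(unit \<Rightarrow> 'a \<Rightarrow> 'k::zero) \<Rightarrow> bool" where
  "nonzero_algebra u \<longleftrightarrow> u () \<noteq> (\<lambda>_. 0)"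

definition tmult :: "('a \<times> 'a \<Rightarrow> 'a \<Rightarrow> 'k::comm_semiring_1) \<Rightarrow> ('b \<times> 'b \<Rightarrow> 'b \<Rightarrow> 'k)
    \<Rightarrow> ('a \<times> 'b) \<times> ('a \<times> 'b) \<Rightarrow> ('a \<times> 'b) \<Rightarrow> 'k" where
  "tmult m1 m2 = (\<lambda>((a, b), (a', b')) (c, d). m1 (a, a') c * m2 (b, b') d)"
definition tunit :: "(unit \<Rightarrow> 'a \<Rightarrow> 'k::comm_semiring_1) \<Rightarrow> (unit \<Rightarrow> 'b \<Rightarrow> 'k) \<Rightarrow> unit \<Rightarrow> ('a \<times> 'b) \<Rightarrow> 'k" where
  "tunit u1 u2 = (\<lambda>_ (c, d). u1 () c * u2 () d)"
definition kmult :: "unit \<times> unit \<Rightarrow> unit \<Rightarrow> 'k::comm_semiring_1" where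
  "kmult = (\<lambda>_ _. 1)"
definition kunit :: "unit \<Rightarrow> unit \<Rightarrow> 'k::comm_semiring_1" where
  "kunit = (\<lambda>_ _. 1)"

definition alg_hom :: "('a \<times> 'a \<Rightarrow> 'a \<Rightarrow> 'k::field) \<Rightarrow> (unit \<Rightarrow> 'a \<Rightarrow> 'k)
    \<Rightarrow> ('b \<times> 'b \<Rightarrow> 'b \<Rightarrow> 'k) \<Rightarrow> (unit \<Rightarrow> 'b \<Rightarrow> 'k) \<Rightarrow> ('a \<Rightarrow> 'b \<Rightarrow> 'k) \<Rightarrow> bool" where
  "alg_hom m u m' u' f \<longleftrightarrow> lmap f \<and> f \<circ>\<^sub>L m = m' \<circ>\<^sub>L (f \<otimes>\<^sub>L f) \<and> f \<circ>\<^sub>L u = u'"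

definition is_bialgebra :: "('a \<times> 'a \<Rightarrow> 'a \<Rightarrow> 'k::field) \<Rightarrow> (unit \<Rightarrow> 'a \<Rightarrow> 'k)
    \<Rightarrow> ('a \<Rightarrow> 'a \<times> 'a \<Rightarrow> 'k) \<Rightarrow> ('a \<Rightarrow> unit \<Rightarrow> 'k) \<Rightarrow> bool" where
  "is_bialgebra m u \<Delta> \<epsilon> \<longleftrightarrow> is_algebra m u \<and> lmap \<Delta> \<and> lmap \<epsilon>
     \<and> lassoc \<circ>\<^sub>L (\<Delta> \<otimes>\<^sub>L lid) \<circ>\<^sub>L \<Delta> = (lid \<otimes>\<^sub>L \<Delta>) \<circ>\<^sub>L \<Delta>
     \<and> (\<epsilon> \<otimes>\<^sub>L lid) \<circ>\<^sub>L \<Delta> = lunitor_inv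
     \<and> (lid \<otimes>\<^sub>L \<epsilon>) \<circ>\<^sub>L \<Delta> = runitor_inv
     \<and> alg_hom m u (tmult m m) (tunit u u) \<Delta>
     \<and> alg_hom m u kmult kunit \<epsilon>"

definition is_antipode :: "('a \<times> 'a \<Rightarrow> 'a \<Rightarrow> 'k::field) \<Rightarrow> (unit \<Rightarrow> 'a \<Rightarrow> 'k)
    \<Rightarrow> ('a \<Rightarrow> 'a \<times> 'a \<Rightarrow> 'k) \<Rightarrow> ('a \<Rightarrow> unit \<Rightarrow> 'k) \<Rightarrow> ('a \<Rightarrow> 'a \<Rightarrow> 'k) \<Rightarrow> bool" where
  "is_antipode m u \<Delta> \<epsilon> S \<longleftrightarrow> lmap S
     \<and> m \<circ>\<^sub>L (S \<otimes>\<^sub>L lid) \<circ>\<^sub>L \<Delta> = u \<circ>\<^sub>L \<epsilon>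
     \<and> m \<circ>\<^sub>L (lid \<otimes>\<^sub>L S) \<circ>\<^sub>L \<Delta> = u \<circ>\<^sub>L \<epsilon>"

definition is_hopf_algebra :: "('a \<times> 'a \<Rightarrow> 'a \<Rightarrow> 'k::field) \<Rightarrow> (unit \<Rightarrow> 'a \<Rightarrow> 'k)
    \<Rightarrow> ('a \<Rightarrow> 'a \<times> 'a \<Rightarrow> 'k) \<Rightarrow> ('a \<Rightarrow> unit \<Rightarrow> 'k) \<Rightarrow> bool" where
  "is_hopf_algebra m u \<Delta> \<epsilon> \<longleftrightarrow> is_bialgebra m u \<Delta> \<epsilon> \<and> (\<exists>S. is_antipode m u \<Delta> \<epsilon> S)"

definition left_comodule :: "('a \<Rightarrow> 'a \<times> 'a \<Rightarrow> 'k::field) \<Rightarrow> ('a \<Rightarrow> unit \<Rightarrow> 'k)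
    \<Rightarrow> ('z \<Rightarrow> 'a \<times> 'z \<Rightarrow> 'k) \<Rightarrow> bool" where
  "left_comodule \<Delta> \<epsilon> \<alpha> \<longleftrightarrow> lmap \<alpha>
     \<and> lassoc \<circ>\<^sub>L (\<Delta> \<otimes>\<^sub>L lid) \<circ>\<^sub>L \<alpha> = (lid \<otimes>\<^sub>L \<alpha>) \<circ>\<^sub>L \<alpha>
     \<and> (\<epsilon> \<otimes>\<^sub>L lid) \<circ>\<^sub>L \<alpha> = lunitor_inv"

definition right_comodule :: "('b \<Rightarrow> 'b \<times> 'b \<Rightarrow> 'k::field) \<Rightarrow> ('b \<Rightarrow> unit \<Rightarrow> 'k)
    \<Rightarrow> ('z \<Rightarrow> 'z \<times> 'b \<Rightarrow> 'k) \<Rightarrow> bool" where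
  "right_comodule \<Delta> \<epsilon> \<beta> \<longleftrightarrow> lmap \<beta>
     \<and> lassoc \<circ>\<^sub>L (\<beta> \<otimes>\<^sub>L lid) \<circ>\<^sub>L \<beta> = (lid \<otimes>\<^sub>L \<Delta>) \<circ>\<^sub>L \<beta>
     \<and> (lid \<otimes>\<^sub>L \<epsilon>) \<circ>\<^sub>L \<beta> = runitor_inv"

definition bicomodule_algebra ::
  "('a \<times> 'a \<Rightarrow> 'a \<Rightarrow> 'k::field) \<Rightarrow> (unit \<Rightarrow> 'a \<Rightarrow> 'k) \<Rightarrow> ('a \<Rightarrow> 'a \<times> 'a \<Rightarrow> 'k) \<Rightarrow> ('a \<Rightarrow> unit \<Rightarrow> 'k)
   \<Rightarrow> ('b \<times> 'b \<Rightarrow> 'b \<Rightarrow> 'k) \<Rightarrow> (unit \<Rightarrow> 'b \<Rightarrow> 'k) \<Rightarrow> ('b \<Rightarrow> 'b \<times> 'b \<Rightarrow> 'k) \<Rightarrow> ('b \<Rightarrow> unit \<Rightarrow> 'k)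
   \<Rightarrow> ('z \<times> 'z \<Rightarrow> 'z \<Rightarrow> 'k) \<Rightarrow> (unit \<Rightarrow> 'z \<Rightarrow> 'k)
   \<Rightarrow> ('z \<Rightarrow> 'a \<times> 'z \<Rightarrow> 'k) \<Rightarrow> ('z \<Rightarrow> 'z \<times> 'b \<Rightarrow> 'k) \<Rightarrow> bool" where
  "bicomodule_algebra mA uA \<Delta>A \<epsilon>A mB uB \<Delta>B \<epsilon>B mZ uZ \<alpha> \<beta> \<longleftrightarrow>
     is_algebra mZ uZ
     \<and> left_comodule \<Delta>A \<epsilon>A \<alpha> \<and> right_comodule \<Delta>B \<epsilon>B \<beta>
     \<and> lassoc \<circ>\<^sub>L (\<alpha> \<otimes>\<^sub>L lid) \<circ>\<^sub>L \<beta> = (lid \<otimes>\<^sub>L \<beta>) \<circ>\<^sub>L \<alpha>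
     \<and> alg_hom mZ uZ (tmult mA mZ) (tunit uA uZ) \<alpha>
     \<and> alg_hom mZ uZ (tmult mZ mB) (tunit uZ uB) \<beta>"

definition hopf_galois_system ::
  "('a \<times> 'a \<Rightarrow> 'a \<Rightarrow> 'k::field) \<Rightarrow> (unit \<Rightarrow> 'a \<Rightarrow> 'k) \<Rightarrow> ('a \<Rightarrow> 'a \<times> 'a \<Rightarrow> 'k) \<Rightarrow> ('a \<Rightarrow> unit \<Rightarrow> 'k)
   \<Rightarrow> ('b \<times> 'b \<Rightarrow> 'b \<Rightarrow> 'k) \<Rightarrow> (unit \<Rightarrow> 'b \<Rightarrow> 'k) \<Rightarrow> ('b \<Rightarrow> 'b \<times> 'b \<Rightarrow> 'k) \<Rightarrow> ('b \<Rightarrow> unit \<Rightarrow> 'k)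
   \<Rightarrow> ('z \<times> 'z \<Rightarrow> 'z \<Rightarrow> 'k) \<Rightarrow> (unit \<Rightarrow> 'z \<Rightarrow> 'k)
   \<Rightarrow> ('t \<times> 't \<Rightarrow> 't \<Rightarrow> 'k) \<Rightarrow> (unit \<Rightarrow> 't \<Rightarrow> 'k)
   \<Rightarrow> ('z \<Rightarrow> 'a \<times> 'z \<Rightarrow> 'k) \<Rightarrow> ('z \<Rightarrow> 'z \<times> 'b \<Rightarrow> 'k)
   \<Rightarrow> ('a \<Rightarrow> 'z \<times> 't \<Rightarrow> 'k) \<Rightarrow> ('b \<Rightarrow> 't \<times> 'z \<Rightarrow> 'k) \<Rightarrow> ('t \<Rightarrow> 'z \<Rightarrow> 'k) \<Rightarrow> bool" where
  "hopf_galois_system mA uA \<Delta>A \<epsilon>A mB uB \<Delta>B \<epsilon>B mZ uZ mT uT \<alpha> \<beta> \<gamma> \<delta> S \<longleftrightarrow>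
     is_algebra mT uT
     \<and> nonzero_algebra uA \<and> nonzero_algebra uB \<and> nonzero_algebra uZ \<and> nonzero_algebra uT
     \<comment> \<open>HG1\<close>
     \<and> is_bialgebra mA uA \<Delta>A \<epsilon>A \<and> is_bialgebra mB uB \<Delta>B \<epsilon>B
     \<comment> \<open>HG2\<close>
     \<and> bicomodule_algebra mA uA \<Delta>A \<epsilon>A mB uB \<Delta>B \<epsilon>B mZ uZ \<alpha> \<beta>
     \<comment> \<open>HG3\<close>
     \<and> alg_hom mA uA (tmult mZ mT) (tunit uZ uT) \<gamma>
     \<and> alg_hom mB uB (tmult mT mZ) (tunit uT uZ) \<delta>
     \<and> lassoc \<circ>\<^sub>L (\<gamma> \<otimes>\<^sub>L lid) \<circ>\<^sub>L \<alpha> = (lid \<otimes>\<^sub>L \<delta>) \<circ>\<^sub>L \<beta>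
     \<and> lassoc \<circ>\<^sub>L (\<alpha> \<otimes>\<^sub>L lid) \<circ>\<^sub>L \<gamma> = (lid \<otimes>\<^sub>L \<gamma>) \<circ>\<^sub>L \<Delta>A
     \<and> (lid \<otimes>\<^sub>L \<beta>) \<circ>\<^sub>L \<delta> = lassoc \<circ>\<^sub>L (\<delta> \<otimes>\<^sub>L lid) \<circ>\<^sub>L \<Delta>B
     \<comment> \<open>HG4\<close>
     \<and> lmap S
     \<and> mZ \<circ>\<^sub>L (lid \<otimes>\<^sub>L S) \<circ>\<^sub>L \<gamma> = uZ \<circ>\<^sub>L \<epsilon>A
     \<and> mZ \<circ>\<^sub>L (S \<otimes>\<^sub>L lid) \<circ>\<^sub>L \<delta> = uZ \<circ>\<^sub>L \<epsilon>B"

end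

theory Submission
  imports Defs
begin

(*
  Write Delta(a) = a(1) (x) a(2), alpha(z) = z(-1) (x) z(0), gamma(a) = a[1] (x) a[2].  Since Z is
  non-zero there is a functional phi on Z with phi(1) = 1; put

    S_A(a) = phi(a[1] S(a[2])(0)) S(a[2])(-1).

  By (HG3) and multiplicativity of alpha, a(1) S_A(a(2)) = (id (x) phi)(alpha(a[1] S(a[2]))),
  and a[1] S(a[2]) = epsilon(a) 1 by (HG4).
  For the other side, the identities a[1](-1) (x) a[1](0) S(a[2]) = a (x) 1 and
  z(-1)[1] S(z(-1)[2]) z(0) = z show that the element
  a(1)[1] S(a(1)[2])(0) (x) S(a(1)[2])(-1) a(2) of Z (x) A equals epsilon(a) 1 (x) 1; applying
  phi (x) id gives S_A(a(1)) a(2) = epsilon(a) 1.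

  The case of B follows by symmetry: (B^op,cop, A^op,cop, Z^op, T^op) with flipped structure maps
  is again a Hopf-Galois system, and an antipode of B^op,cop is an antipode of B.
*)

(* The linear extension of F evaluated at v.  Two linear maps agree iff all these pairings of
   their values agree (lmap_eqI), which turns the axioms into Sweedler-style identities. *)
definition lpair :: "('j \<Rightarrow> 'k::comm_semiring_1) \<Rightarrow> ('j \<Rightarrow> 'k) \<Rightarrow> 'k" where
  "lpair v F = (\<Sum>j\<in>{j. v j \<noteq> 0}. v j * F j)"

lemma lpair_superset:
  assumes "finite U" "{j. v j \<noteq> 0} \<subseteq> U"
  shows "lpair v F = (\<Sum>j\<in>U. v j * F j)"
  unfolding lpair_def using assms by (intro sum.mono_neutral_left) auto

lemma lpair_cmult: "lpair v (\<lambda>j. c * F j) = c * lpair v F"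
  unfolding lpair_def by (simp add: sum_distrib_left mult.left_commute)

lemma lpair_multc: "lpair v (\<lambda>j. F j * c) = lpair v F * c"
  unfolding lpair_def by (simp add: sum_distrib_right mult.assoc)

lemma lpair_infinite: "infinite {j. v j \<noteq> 0} \<Longrightarrow> lpair v F = 0"
  unfolding lpair_def by simp

lemma lpair_swap: "lpair v (\<lambda>i. lpair w (\<lambda>j. G i j)) = lpair w (\<lambda>j. lpair v (\<lambda>i. G i j))"
proof (cases "finite {j. v j \<noteq> 0} \<and> finite {j. w j \<noteq> 0}")
  case True
  then show ?thesis unfolding lpair_def
    by (simp add: sum_distrib_left mult_ac sum.swap[of _ "{j. v j \<noteq> 0}"])
qed (auto simp: lpair_infinite lpair_def)

lemma lpair_indicator:
  "finite {j. v j \<noteq> 0} \<Longrightarrow> lpair v (\<lambda>j. if j = l then 1 else 0) = v l"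
  unfolding lpair_def by (cases "v l = 0") (auto simp: if_distrib cong: if_cong)

lemma lpair_unit [simp]: "lpair (v :: unit \<Rightarrow> 'k::comm_semiring_1) F = v () * F ()"
  by (subst lpair_superset[of UNIV]) (auto simp: UNIV_unit)

lemma supp_ltensor:
  "{p. (f \<otimes>\<^sub>L g) (i, i') p \<noteq> (0::'k::field)} = {j. f i j \<noteq> 0} \<times> {j. g i' j \<noteq> 0}"
  unfolding ltensor_def by auto

lemma supp_lbasis: "{j. (lbasis h i :: 'j \<Rightarrow> 'k::field) j \<noteq> 0} = {h i}"
  unfolding lbasis_def by auto

lemma lmap_lcomp [simp]:
  fixes f :: "'i \<Rightarrow> 'j \<Rightarrow> 'k::field"
  assumes "lmap f" "lmap g" shows "lmap (g \<circ>\<^sub>L f)"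
  unfolding lmap_def
proof
  fix i
  have "{l. (g \<circ>\<^sub>L f) i l \<noteq> 0} \<subseteq> (\<Union>j\<in>{j. f i j \<noteq> 0}. {l. g j l \<noteq> 0})"
    unfolding lcomp_def by (auto elim!: sum.not_neutral_contains_not_neutral)
  then show "finite {l. (g \<circ>\<^sub>L f) i l \<noteq> 0}"
    using assms unfolding lmap_def by (auto intro: finite_subset)
qed

lemma lmap_ltensor [simp]:
  fixes f :: "'i \<Rightarrow> 'j \<Rightarrow> 'k::field"
  assumes "lmap f" "lmap g" shows "lmap (f \<otimes>\<^sub>L g)"
  using assms unfolding lmap_def by (simp add: split_paired_all supp_ltensor)

lemma lmap_lbasis [simp]: "lmap (lbasis h :: 'i \<Rightarrow> 'j \<Rightarrow> 'k::field)"
  unfolding lmap_def supp_lbasis by simp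

lemma lmap_structure_maps [simp]:
  "lmap (lid :: _ \<Rightarrow> _ \<Rightarrow> 'k::field)" "lmap (lassoc :: _ \<Rightarrow> _ \<Rightarrow> 'k::field)"
  "lmap (lunitor :: _ \<Rightarrow> _ \<Rightarrow> 'k::field)" "lmap (runitor :: _ \<Rightarrow> _ \<Rightarrow> 'k::field)"
  "lmap (lunitor_inv :: _ \<Rightarrow> _ \<Rightarrow> 'k::field)" "lmap (runitor_inv :: _ \<Rightarrow> _ \<Rightarrow> 'k::field)"
  unfolding lid_def lassoc_def lunitor_def runitor_def lunitor_inv_def runitor_inv_def by simp_all

lemma lpair_lcomp [simp]:
  fixes f :: "'i \<Rightarrow> 'j \<Rightarrow> 'k::field"
  assumes "lmap f" "lmap g"
  shows "lpair ((g \<circ>\<^sub>L f) i) F = lpair (f i) (\<lambda>j. lpair (g j) F)"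
proof -
  define U where "U = (\<Union>j\<in>{j. f i j \<noteq> 0}. {l. g j l \<noteq> 0})"
  have U: "finite U" "\<And>j. f i j \<noteq> 0 \<Longrightarrow> {l. g j l \<noteq> 0} \<subseteq> U"
    using assms unfolding lmap_def U_def by auto
  have "{l. (g \<circ>\<^sub>L f) i l \<noteq> 0} \<subseteq> U"
    unfolding lcomp_def U_def by (auto elim!: sum.not_neutral_contains_not_neutral)
  then have "lpair ((g \<circ>\<^sub>L f) i) F = (\<Sum>l\<in>U. \<Sum>j | f i j \<noteq> 0. f i j * g j l * F l)"
    using U by (simp add: lpair_superset lcomp_def sum_distrib_right)
  also have "\<dots> = (\<Sum>j | f i j \<noteq> 0. f i j * (\<Sum>l\<in>U. g j l * F l))"
    by (subst sum.swap) (simp add: sum_distrib_left mult.assoc)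
  also have "\<dots> = lpair (f i) (\<lambda>j. lpair (g j) F)"
    unfolding lpair_def[of "f i"] by (intro sum.cong refl) (simp add: U lpair_superset[symmetric])
  finally show ?thesis .
qed

lemma lpair_ltensor [simp]:
  "lpair ((f \<otimes>\<^sub>L g) p) F = lpair (f (fst p)) (\<lambda>a. lpair (g (snd p)) (\<lambda>b. F (a, b)))"
  for f :: "'i \<Rightarrow> 'j \<Rightarrow> 'k::field"
proof (cases p)
  case (Pair i i')
  let ?A = "{j. f i j \<noteq> 0}" and ?B = "{j. g i' j \<noteq> 0}"
  consider "?A = {} \<or> ?B = {}" | "finite ?A" "finite ?B"
    | "?A \<noteq> {}" "?B \<noteq> {}" "infinite ?A \<or> infinite ?B" by blast
  then show ?thesis
  proof cases
    case 2
    then show ?thesis unfolding Pair lpair_def supp_ltensor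
      by (simp add: sum.cartesian_product ltensor_def sum_distrib_left mult.assoc split_def)
  next
    case 3
    then have "infinite (?A \<times> ?B)"
      by (auto dest: finite_cartesian_productD1 finite_cartesian_productD2)
    with 3 show ?thesis
      by (auto simp: Pair lpair_infinite supp_ltensor lpair_def[of "f i"])
  qed (auto simp: Pair lpair_def supp_ltensor)
qed

lemma lpair_lbasis [simp]: "lpair (lbasis h i :: 'j \<Rightarrow> 'k::field) F = F (h i)"
  unfolding lpair_def supp_lbasis by (simp add: lbasis_def)

lemma lpair_lid [simp]: "lpair (lid i :: _ \<Rightarrow> 'k::field) F = F i"
  unfolding lid_def by simp

lemma lpair_lassoc [simp]:
  "lpair (lassoc p :: _ \<Rightarrow> 'k::field) F = F (fst (fst p), snd (fst p), snd p)"
  unfolding lassoc_def by (simp add: split_def)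

lemma lpair_lunitor [simp]: "lpair (lunitor p :: _ \<Rightarrow> 'k::field) F = F (snd p)"
  unfolding lunitor_def by simp

lemma lpair_runitor [simp]: "lpair (runitor p :: _ \<Rightarrow> 'k::field) F = F (fst p)"
  unfolding runitor_def by simp

lemma lpair_lunitor_inv [simp]: "lpair (lunitor_inv x :: _ \<Rightarrow> 'k::field) F = F ((), x)"
  unfolding lunitor_inv_def by simp

lemma lpair_runitor_inv [simp]: "lpair (runitor_inv x :: _ \<Rightarrow> 'k::field) F = F (x, ())"
  unfolding runitor_inv_def by simp

lemma tmult_eq_ltensor: "tmult m1 m2 ((a, b), (a', b')) = (m1 \<otimes>\<^sub>L m2) ((a, a'), (b, b'))"
  unfolding tmult_def ltensor_def by simp

lemma tunit_eq_ltensor: "tunit u1 u2 x = (u1 \<otimes>\<^sub>L u2) ((), ())"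
  unfolding tunit_def ltensor_def by simp

lemma lpair_tmult [simp]:
  fixes m1 :: "'a \<times> 'a \<Rightarrow> 'a \<Rightarrow> 'k::field"
  shows "lpair (tmult m1 m2 (p, q)) F =
    lpair (m1 (fst p, fst q)) (\<lambda>c. lpair (m2 (snd p, snd q)) (\<lambda>d. F (c, d)))"
  by (cases p, cases q) (simp add: tmult_eq_ltensor)

lemma lpair_tunit [simp]:
  fixes u1 :: "unit \<Rightarrow> 'a \<Rightarrow> 'k::field"
  shows "lpair (tunit u1 u2 x) F = lpair (u1 ()) (\<lambda>c. lpair (u2 ()) (\<lambda>d. F (c, d)))"
  by (simp add: tunit_eq_ltensor)

lemma lmap_tmult [simp]:
  fixes m1 :: "'a \<times> 'a \<Rightarrow> 'a \<Rightarrow> 'k::field"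
  assumes "lmap m1" "lmap m2" shows "lmap (tmult m1 m2)"
  using lmap_ltensor[OF assms] unfolding lmap_def by (simp add: split_paired_all tmult_eq_ltensor)

lemma lmap_tunit [simp]:
  fixes u1 :: "unit \<Rightarrow> 'a \<Rightarrow> 'k::field"
  assumes "lmap u1" "lmap u2" shows "lmap (tunit u1 u2)"
  using lmap_ltensor[OF assms] unfolding lmap_def by (simp add: tunit_eq_ltensor)

lemma lmap_eqI:
  fixes f :: "'i \<Rightarrow> 'j \<Rightarrow> 'k::field"
  assumes "lmap f" "lmap g" "\<And>i F. lpair (f i) F = lpair (g i) F"
  shows "f = g"
proof (intro ext)
  fix i l
  from assms show "f i l = g i l"
    unfolding lmap_def using lpair_indicator[of "f i" l] lpair_indicator[of "g i" l] by metis
qed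

lemma lmap_eq_iff:
  fixes f :: "'i \<Rightarrow> 'j \<Rightarrow> 'k::field"
  assumes "lmap f" "lmap g"
  shows "f = g \<longleftrightarrow> (\<forall>i F. lpair (f i) F = lpair (g i) F)"
  using lmap_eqI[OF assms] by auto

lemma is_algebra_iff:
  "is_algebra m u \<longleftrightarrow> lmap m \<and> lmap u
     \<and> (\<forall>x y z F. lpair (m (x, y)) (\<lambda>p. lpair (m (p, z)) F) = lpair (m (y, z)) (\<lambda>q. lpair (m (x, q)) F))
     \<and> (\<forall>x F. lpair (u ()) (\<lambda>w. lpair (m (w, x)) F) = F x)
     \<and> (\<forall>x F. lpair (u ()) (\<lambda>w. lpair (m (x, w)) F) = F x)"
  for m :: "'a \<times> 'a \<Rightarrow> 'a \<Rightarrow> 'k::field"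
  unfolding is_algebra_def by (auto simp: lmap_eq_iff split_paired_All)

lemma alg_hom_iff:
  fixes f :: "'a \<Rightarrow> 'b \<Rightarrow> 'k::field"
  assumes "lmap m" "lmap u" "lmap m'" "lmap u'"
  shows "alg_hom m u m' u' f \<longleftrightarrow> lmap f
     \<and> (\<forall>x y F. lpair (m (x, y)) (\<lambda>p. lpair (f p) F) = lpair (f x) (\<lambda>a. lpair (f y) (\<lambda>b. lpair (m' (a, b)) F)))
     \<and> (\<forall>F. lpair (u ()) (\<lambda>p. lpair (f p) F) = lpair (u' ()) F)"
  using assms unfolding alg_hom_def by (auto simp: lmap_eq_iff split_paired_All)

definition lswap :: "('a \<times> 'b) \<Rightarrow> ('b \<times> 'a) \<Rightarrow> 'k::comm_semiring_1" where
  "lswap = lbasis prod.swap"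

lemma lmap_lswap [simp]: "lmap (lswap :: _ \<Rightarrow> _ \<Rightarrow> 'k::field)"
  unfolding lswap_def by simp

lemma lpair_lswap [simp]: "lpair (lswap p :: _ \<Rightarrow> 'k::field) F = F (snd p, fst p)"
  unfolding lswap_def by (simp add: prod.swap_def)

lemma is_algebra_op:
  fixes m :: "'a \<times> 'a \<Rightarrow> 'a \<Rightarrow> 'k::field"
  assumes "is_algebra m u"
  shows "is_algebra (m \<circ>\<^sub>L lswap) u"
  using assms unfolding is_algebra_iff by simp

lemma alg_hom_tensor_flip:
  fixes f :: "'a \<Rightarrow> 'b \<times> 'c \<Rightarrow> 'k::field"
  assumes lmaps: "lmap m" "lmap u" "lmap m1" "lmap u1" "lmap m2" "lmap u2"
    and "alg_hom m u (tmult m1 m2) (tunit u1 u2) f"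
  shows "alg_hom (m \<circ>\<^sub>L lswap) u (tmult (m2 \<circ>\<^sub>L lswap) (m1 \<circ>\<^sub>L lswap)) (tunit u2 u1) (lswap \<circ>\<^sub>L f)"
proof -
  have f: "lmap f"
    and mult: "\<And>x y F. lpair (m (x, y)) (\<lambda>p. lpair (f p) F)
      = lpair (f x) (\<lambda>a. lpair (f y) (\<lambda>b. lpair (m1 (fst a, fst b)) (\<lambda>c. lpair (m2 (snd a, snd b)) (\<lambda>d. F (c, d)))))"
    and unit: "\<And>F. lpair (u ()) (\<lambda>p. lpair (f p) F) = lpair (u1 ()) (\<lambda>c. lpair (u2 ()) (\<lambda>d. F (c, d)))"
    using assms(7) unfolding alg_hom_iff[OF lmaps(1,2) lmap_tmult[OF lmaps(3,5)] lmap_tunit[OF lmaps(4,6)]]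
    by auto
  have lmaps': "lmap (m \<circ>\<^sub>L lswap)" "lmap (tmult (m2 \<circ>\<^sub>L lswap) (m1 \<circ>\<^sub>L lswap))" "lmap (tunit u2 u1)"
    using lmaps by simp_all
  show ?thesis
    unfolding alg_hom_iff[OF lmaps'(1) lmaps(2) lmaps'(2,3)]
  proof (intro conjI allI)
    fix x y F
    show "lpair ((m \<circ>\<^sub>L lswap) (x, y)) (\<lambda>p. lpair ((lswap \<circ>\<^sub>L f) p) F) =
      lpair ((lswap \<circ>\<^sub>L f) x) (\<lambda>a. lpair ((lswap \<circ>\<^sub>L f) y) (\<lambda>b.
        lpair (tmult (m2 \<circ>\<^sub>L lswap) (m1 \<circ>\<^sub>L lswap) (a, b)) F))"
      using mult[of y x] f lmaps
      by (simp add: lpair_swap[of "f y" "f x"] lpair_swap[of "m1 _" "m2 _"])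
  next
    fix F
    show "lpair (u ()) (\<lambda>p. lpair ((lswap \<circ>\<^sub>L f) p) F) = lpair (tunit u2 u1 ()) F"
      using unit f lmaps by (simp add: lpair_swap[of "u1 ()" "u2 ()"])
  qed (use f lmaps in simp_all)
qed

lemma lmap_unit_target [simp]: "lmap (f :: 'i \<Rightarrow> unit \<Rightarrow> 'k::zero)"
  unfolding lmap_def by simp

lemma alg_hom_op_counit:
  fixes m :: "'a \<times> 'a \<Rightarrow> 'a \<Rightarrow> 'k::field"
  assumes "lmap m" "lmap u" "alg_hom m u kmult kunit \<epsilon>"
  shows "alg_hom (m \<circ>\<^sub>L lswap) u kmult kunit \<epsilon>"
  using assms unfolding alg_hom_iff[OF assms(1,2) lmap_unit_target lmap_unit_target]
    alg_hom_iff[OF lmap_lcomp[OF lmap_lswap assms(1)] assms(2) lmap_unit_target lmap_unit_target]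
  by (simp add: kmult_def mult_ac)

lemma left_comodule_flip:
  fixes \<Delta> :: "'a \<Rightarrow> 'a \<times> 'a \<Rightarrow> 'k::field"
  assumes lmaps: "lmap \<Delta>" "lmap \<epsilon>" and "left_comodule \<Delta> \<epsilon> \<alpha>"
  shows "right_comodule (lswap \<circ>\<^sub>L \<Delta>) \<epsilon> (lswap \<circ>\<^sub>L \<alpha>)"
proof -
  have \<alpha>: "lmap \<alpha>"
    and coassoc: "lassoc \<circ>\<^sub>L (\<Delta> \<otimes>\<^sub>L lid) \<circ>\<^sub>L \<alpha> = (lid \<otimes>\<^sub>L \<alpha>) \<circ>\<^sub>L \<alpha>"
    and counit: "(\<epsilon> \<otimes>\<^sub>L lid) \<circ>\<^sub>L \<alpha> = lunitor_inv"
    using assms(3) unfolding left_comodule_def by auto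
  have "lassoc \<circ>\<^sub>L ((lswap \<circ>\<^sub>L \<alpha>) \<otimes>\<^sub>L lid) \<circ>\<^sub>L lswap \<circ>\<^sub>L \<alpha>
      = (lid \<otimes>\<^sub>L (lswap \<circ>\<^sub>L \<Delta>)) \<circ>\<^sub>L lswap \<circ>\<^sub>L \<alpha>"
    using arg_cong[OF coassoc, of "\<lambda>h. lpair (h z) (\<lambda>(a1, a2, w). F (w, a2, a1))" for z F] \<alpha> lmaps
    by (intro lmap_eqI) (simp_all add: split_def)
  moreover have "(lid \<otimes>\<^sub>L \<epsilon>) \<circ>\<^sub>L lswap \<circ>\<^sub>L \<alpha> = runitor_inv"
    using arg_cong[OF counit, of "\<lambda>h. lpair (h z) (\<lambda>(_, w). F (w, ()))" for z F] \<alpha> lmaps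
    by (intro lmap_eqI) (simp_all add: split_def)
  ultimately show ?thesis
    unfolding right_comodule_def using \<alpha> lmaps by simp
qed

lemma right_comodule_flip:
  fixes \<Delta> :: "'a \<Rightarrow> 'a \<times> 'a \<Rightarrow> 'k::field"
  assumes lmaps: "lmap \<Delta>" "lmap \<epsilon>" and "right_comodule \<Delta> \<epsilon> \<beta>"
  shows "left_comodule (lswap \<circ>\<^sub>L \<Delta>) \<epsilon> (lswap \<circ>\<^sub>L \<beta>)"
proof -
  have \<beta>: "lmap \<beta>"
    and coassoc: "lassoc \<circ>\<^sub>L (\<beta> \<otimes>\<^sub>L lid) \<circ>\<^sub>L \<beta> = (lid \<otimes>\<^sub>L \<Delta>) \<circ>\<^sub>L \<beta>"
    and counit: "(lid \<otimes>\<^sub>L \<epsilon>) \<circ>\<^sub>L \<beta> = runitor_inv"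
    using assms(3) unfolding right_comodule_def by auto
  have "lassoc \<circ>\<^sub>L ((lswap \<circ>\<^sub>L \<Delta>) \<otimes>\<^sub>L lid) \<circ>\<^sub>L lswap \<circ>\<^sub>L \<beta>
      = (lid \<otimes>\<^sub>L (lswap \<circ>\<^sub>L \<beta>)) \<circ>\<^sub>L lswap \<circ>\<^sub>L \<beta>"
    using arg_cong[OF coassoc, of "\<lambda>h. lpair (h z) (\<lambda>(w, b1, b2). F (b2, b1, w))" for z F] \<beta> lmaps
    by (intro lmap_eqI) (simp_all add: split_def)
  moreover have "(\<epsilon> \<otimes>\<^sub>L lid) \<circ>\<^sub>L lswap \<circ>\<^sub>L \<beta> = lunitor_inv"
    using arg_cong[OF counit, of "\<lambda>h. lpair (h z) (\<lambda>(w, _). F ((), w))" for z F] \<beta> lmaps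
    by (intro lmap_eqI) (simp_all add: split_def)
  ultimately show ?thesis
    unfolding left_comodule_def using \<beta> lmaps by simp
qed

lemma is_bialgebra_iff_comodules:
  "is_bialgebra m u \<Delta> \<epsilon> \<longleftrightarrow> is_algebra m u \<and> lmap \<Delta> \<and> lmap \<epsilon>
     \<and> left_comodule \<Delta> \<epsilon> \<Delta> \<and> right_comodule \<Delta> \<epsilon> \<Delta>
     \<and> alg_hom m u (tmult m m) (tunit u u) \<Delta> \<and> alg_hom m u kmult kunit \<epsilon>"
  unfolding is_bialgebra_def left_comodule_def right_comodule_def by auto

lemma is_bialgebra_op_cop:
  fixes m :: "'a \<times> 'a \<Rightarrow> 'a \<Rightarrow> 'k::field"
  assumes "is_bialgebra m u \<Delta> \<epsilon>"
  shows "is_bialgebra (m \<circ>\<^sub>L lswap) u (lswap \<circ>\<^sub>L \<Delta>) \<epsilon>"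
proof -
  have alg: "is_algebra m u" and lmaps: "lmap m" "lmap u" "lmap \<Delta>" "lmap \<epsilon>"
    using assms unfolding is_bialgebra_def is_algebra_def by auto
  with assms show ?thesis
    unfolding is_bialgebra_iff_comodules
    by (auto intro: is_algebra_op left_comodule_flip right_comodule_flip alg_hom_op_counit
        alg_hom_tensor_flip[of m u m u m u])
qed

lemma bicomodule_algebra_flip:
  fixes mA :: "'a \<times> 'a \<Rightarrow> 'a \<Rightarrow> 'k::field"
  assumes "is_bialgebra mA uA \<Delta>A \<epsilon>A" "is_bialgebra mB uB \<Delta>B \<epsilon>B"
    and "bicomodule_algebra mA uA \<Delta>A \<epsilon>A mB uB \<Delta>B \<epsilon>B mZ uZ \<alpha> \<beta>"
  shows "bicomodule_algebra (mB \<circ>\<^sub>L lswap) uB (lswap \<circ>\<^sub>L \<Delta>B) \<epsilon>B (mA \<circ>\<^sub>L lswap) uA (lswap \<circ>\<^sub>L \<Delta>A) \<epsilon>A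
      (mZ \<circ>\<^sub>L lswap) uZ (lswap \<circ>\<^sub>L \<beta>) (lswap \<circ>\<^sub>L \<alpha>)"
proof -
  have lmaps: "lmap mA" "lmap uA" "lmap \<Delta>A" "lmap \<epsilon>A" "lmap mB" "lmap uB" "lmap \<Delta>B" "lmap \<epsilon>B"
      "lmap mZ" "lmap uZ" "lmap \<alpha>" "lmap \<beta>"
    and Z: "is_algebra mZ uZ" "left_comodule \<Delta>A \<epsilon>A \<alpha>" "right_comodule \<Delta>B \<epsilon>B \<beta>"
      "alg_hom mZ uZ (tmult mA mZ) (tunit uA uZ) \<alpha>" "alg_hom mZ uZ (tmult mZ mB) (tunit uZ uB) \<beta>"
    and compat: "lassoc \<circ>\<^sub>L (\<alpha> \<otimes>\<^sub>L lid) \<circ>\<^sub>L \<beta> = (lid \<otimes>\<^sub>L \<beta>) \<circ>\<^sub>L \<alpha>"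
    using assms unfolding bicomodule_algebra_def is_bialgebra_def is_algebra_def
      left_comodule_def right_comodule_def by auto
  have "lassoc \<circ>\<^sub>L ((lswap \<circ>\<^sub>L \<beta>) \<otimes>\<^sub>L lid) \<circ>\<^sub>L lswap \<circ>\<^sub>L \<alpha>
      = (lid \<otimes>\<^sub>L (lswap \<circ>\<^sub>L \<alpha>)) \<circ>\<^sub>L lswap \<circ>\<^sub>L \<beta>"
    using arg_cong[OF compat, of "\<lambda>h. lpair (h z) (\<lambda>(a, w, b). F (b, w, a))" for z F] lmaps
    by (intro lmap_eqI) (simp_all add: split_def)
  with lmaps Z show ?thesis
    unfolding bicomodule_algebra_def
    by (simp add: is_algebra_op left_comodule_flip right_comodule_flip alg_hom_tensor_flip)
qed

lemma is_hopf_algebra_op_cop: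
  fixes m :: "'a \<times> 'a \<Rightarrow> 'a \<Rightarrow> 'k::field"
  assumes "is_bialgebra m u \<Delta> \<epsilon>" and "is_hopf_algebra (m \<circ>\<^sub>L lswap) u (lswap \<circ>\<^sub>L \<Delta>) \<epsilon>"
  shows "is_hopf_algebra m u \<Delta> \<epsilon>"
proof -
  obtain S where S: "is_antipode (m \<circ>\<^sub>L lswap) u (lswap \<circ>\<^sub>L \<Delta>) \<epsilon> S"
    using assms(2) unfolding is_hopf_algebra_def by blast
  have "lmap m" "lmap u" "lmap \<Delta>" "lmap \<epsilon>" "lmap S"
    using assms(1) S unfolding is_bialgebra_def is_algebra_def is_antipode_def by simp_all
  with S have "is_antipode m u \<Delta> \<epsilon> S"
    unfolding is_antipode_def by (simp add: lmap_eq_iff split_def)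
  with assms(1) show ?thesis
    unfolding is_hopf_algebra_def by blast
qed

lemma hopf_galois_system_mirror:
  fixes mA :: "'a \<times> 'a \<Rightarrow> 'a \<Rightarrow> 'k::field"
  assumes "hopf_galois_system mA uA \<Delta>A \<epsilon>A mB uB \<Delta>B \<epsilon>B mZ uZ mT uT \<alpha> \<beta> \<gamma> \<delta> S"
  shows "hopf_galois_system (mB \<circ>\<^sub>L lswap) uB (lswap \<circ>\<^sub>L \<Delta>B) \<epsilon>B (mA \<circ>\<^sub>L lswap) uA (lswap \<circ>\<^sub>L \<Delta>A) \<epsilon>A
      (mZ \<circ>\<^sub>L lswap) uZ (mT \<circ>\<^sub>L lswap) uT
      (lswap \<circ>\<^sub>L \<beta>) (lswap \<circ>\<^sub>L \<alpha>) (lswap \<circ>\<^sub>L \<delta>) (lswap \<circ>\<^sub>L \<gamma>) S"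
proof -
  have lmaps: "lmap mA" "lmap uA" "lmap \<Delta>A" "lmap \<epsilon>A" "lmap mB" "lmap uB" "lmap \<Delta>B" "lmap \<epsilon>B"
      "lmap mZ" "lmap uZ" "lmap mT" "lmap uT" "lmap \<alpha>" "lmap \<beta>" "lmap \<gamma>" "lmap \<delta>" "lmap S"
    and homs: "alg_hom mA uA (tmult mZ mT) (tunit uZ uT) \<gamma>" "alg_hom mB uB (tmult mT mZ) (tunit uT uZ) \<delta>"
    and hg3a: "lassoc \<circ>\<^sub>L (\<gamma> \<otimes>\<^sub>L lid) \<circ>\<^sub>L \<alpha> = (lid \<otimes>\<^sub>L \<delta>) \<circ>\<^sub>L \<beta>"
    and hg3b: "lassoc \<circ>\<^sub>L (\<alpha> \<otimes>\<^sub>L lid) \<circ>\<^sub>L \<gamma> = (lid \<otimes>\<^sub>L \<gamma>) \<circ>\<^sub>L \<Delta>A"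
    and hg3c: "(lid \<otimes>\<^sub>L \<beta>) \<circ>\<^sub>L \<delta> = lassoc \<circ>\<^sub>L (\<delta> \<otimes>\<^sub>L lid) \<circ>\<^sub>L \<Delta>B"
    and hg4: "mZ \<circ>\<^sub>L (lid \<otimes>\<^sub>L S) \<circ>\<^sub>L \<gamma> = uZ \<circ>\<^sub>L \<epsilon>A" "mZ \<circ>\<^sub>L (S \<otimes>\<^sub>L lid) \<circ>\<^sub>L \<delta> = uZ \<circ>\<^sub>L \<epsilon>B"
    using assms unfolding hopf_galois_system_def bicomodule_algebra_def is_bialgebra_def
      is_algebra_def left_comodule_def right_comodule_def alg_hom_def[of _ _ _ _ \<gamma>]
      alg_hom_def[of _ _ _ _ \<delta>] by auto
  have "lassoc \<circ>\<^sub>L ((lswap \<circ>\<^sub>L \<delta>) \<otimes>\<^sub>L lid) \<circ>\<^sub>L lswap \<circ>\<^sub>L \<beta>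
      = (lid \<otimes>\<^sub>L (lswap \<circ>\<^sub>L \<gamma>)) \<circ>\<^sub>L lswap \<circ>\<^sub>L \<alpha>"
    using arg_cong[OF hg3a, of "\<lambda>h. lpair (h z) (\<lambda>(x, t, w). F (w, t, x))" for z F] lmaps
    by (intro lmap_eqI) (simp_all add: split_def)
  moreover have "lassoc \<circ>\<^sub>L ((lswap \<circ>\<^sub>L \<beta>) \<otimes>\<^sub>L lid) \<circ>\<^sub>L lswap \<circ>\<^sub>L \<delta>
      = (lid \<otimes>\<^sub>L (lswap \<circ>\<^sub>L \<delta>)) \<circ>\<^sub>L lswap \<circ>\<^sub>L \<Delta>B"
    using arg_cong[OF hg3c, of "\<lambda>h. lpair (h b) (\<lambda>(t, z, b'). F (b', z, t))" for b F] lmaps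
    by (intro lmap_eqI) (simp_all add: split_def)
  moreover have "(lid \<otimes>\<^sub>L (lswap \<circ>\<^sub>L \<alpha>)) \<circ>\<^sub>L lswap \<circ>\<^sub>L \<gamma>
      = lassoc \<circ>\<^sub>L ((lswap \<circ>\<^sub>L \<gamma>) \<otimes>\<^sub>L lid) \<circ>\<^sub>L lswap \<circ>\<^sub>L \<Delta>A"
    using arg_cong[OF hg3b, of "\<lambda>h. lpair (h a) (\<lambda>(a', z, t). F (t, z, a'))" for a F] lmaps
    by (intro lmap_eqI) (simp_all add: split_def)
  moreover have "(mZ \<circ>\<^sub>L lswap) \<circ>\<^sub>L (lid \<otimes>\<^sub>L S) \<circ>\<^sub>L lswap \<circ>\<^sub>L \<delta> = uZ \<circ>\<^sub>L \<epsilon>B"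
    "(mZ \<circ>\<^sub>L lswap) \<circ>\<^sub>L (S \<otimes>\<^sub>L lid) \<circ>\<^sub>L lswap \<circ>\<^sub>L \<gamma> = uZ \<circ>\<^sub>L \<epsilon>A"
    using hg4 lmaps by (simp_all add: lmap_eq_iff split_def)
  moreover note homs[THEN alg_hom_tensor_flip[rotated 6]]
  ultimately show ?thesis
    using assms lmaps unfolding hopf_galois_system_def
    by (simp add: is_algebra_op is_bialgebra_op_cop bicomodule_algebra_flip)
qed

lemma exists_functional_one:
  fixes u :: "unit \<Rightarrow> 'a \<Rightarrow> 'k::field"
  assumes "lmap u" "nonzero_algebra u"
  shows "\<exists>\<phi>. lpair (u ()) \<phi> = 1"
proof -
  obtain z0 where z0: "u () z0 \<noteq> 0"
    using assms(2) unfolding nonzero_algebra_def by auto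
  have "lpair (u ()) (\<lambda>z. inverse (u () z0) * (if z = z0 then 1 else 0)) = 1"
    using assms(1) z0 unfolding lmap_def by (simp add: lpair_cmult lpair_indicator)
  then show ?thesis by blast
qed

locale hopf_galois =
  fixes mA :: "'a \<times> 'a \<Rightarrow> 'a \<Rightarrow> 'k::field" and uA :: "unit \<Rightarrow> 'a \<Rightarrow> 'k"
    and \<Delta>A :: "'a \<Rightarrow> 'a \<times> 'a \<Rightarrow> 'k" and \<epsilon>A :: "'a \<Rightarrow> unit \<Rightarrow> 'k"
    and mB :: "'b \<times> 'b \<Rightarrow> 'b \<Rightarrow> 'k" and uB :: "unit \<Rightarrow> 'b \<Rightarrow> 'k"
    and \<Delta>B :: "'b \<Rightarrow> 'b \<times> 'b \<Rightarrow> 'k" and \<epsilon>B :: "'b \<Rightarrow> unit \<Rightarrow> 'k"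
    and mZ :: "'z \<times> 'z \<Rightarrow> 'z \<Rightarrow> 'k" and uZ :: "unit \<Rightarrow> 'z \<Rightarrow> 'k"
    and mT :: "'t \<times> 't \<Rightarrow> 't \<Rightarrow> 'k" and uT :: "unit \<Rightarrow> 't \<Rightarrow> 'k"
    and \<alpha> :: "'z \<Rightarrow> 'a \<times> 'z \<Rightarrow> 'k" and \<beta> :: "'z \<Rightarrow> 'z \<times> 'b \<Rightarrow> 'k"
    and \<gamma> :: "'a \<Rightarrow> 'z \<times> 't \<Rightarrow> 'k" and \<delta> :: "'b \<Rightarrow> 't \<times> 'z \<Rightarrow> 'k"
    and S :: "'t \<Rightarrow> 'z \<Rightarrow> 'k"
  assumes system: "hopf_galois_system mA uA \<Delta>A \<epsilon>A mB uB \<Delta>B \<epsilon>B mZ uZ mT uT \<alpha> \<beta> \<gamma> \<delta> S"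
begin

lemma lmaps [simp]: "lmap mA" "lmap uA" "lmap \<Delta>A" "lmap \<epsilon>A" "lmap \<epsilon>B" "lmap mZ" "lmap uZ"
  "lmap \<alpha>" "lmap \<beta>" "lmap \<gamma>" "lmap \<delta>" "lmap S"
  using system unfolding hopf_galois_system_def is_bialgebra_def is_algebra_def bicomodule_algebra_def
    left_comodule_def right_comodule_def alg_hom_def by auto

lemma
  shows \<Delta>A_counit: "(lid \<otimes>\<^sub>L \<epsilon>A) \<circ>\<^sub>L \<Delta>A = runitor_inv"
    and \<alpha>_mult: "\<alpha> \<circ>\<^sub>L mZ = tmult mA mZ \<circ>\<^sub>L (\<alpha> \<otimes>\<^sub>L \<alpha>)"
    and \<alpha>_unit: "\<alpha> \<circ>\<^sub>L uZ = tunit uA uZ"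
    and \<alpha>_coassoc: "lassoc \<circ>\<^sub>L (\<Delta>A \<otimes>\<^sub>L lid) \<circ>\<^sub>L \<alpha> = (lid \<otimes>\<^sub>L \<alpha>) \<circ>\<^sub>L \<alpha>"
    and \<beta>_counit: "(lid \<otimes>\<^sub>L \<epsilon>B) \<circ>\<^sub>L \<beta> = runitor_inv"
    and mZ_assoc: "mZ \<circ>\<^sub>L (mZ \<otimes>\<^sub>L lid) = mZ \<circ>\<^sub>L (lid \<otimes>\<^sub>L mZ) \<circ>\<^sub>L lassoc"
    and uZ_right: "mZ \<circ>\<^sub>L (lid \<otimes>\<^sub>L uZ) = runitor"
    and hg3a: "lassoc \<circ>\<^sub>L (\<gamma> \<otimes>\<^sub>L lid) \<circ>\<^sub>L \<alpha> = (lid \<otimes>\<^sub>L \<delta>) \<circ>\<^sub>L \<beta>"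
    and hg3b: "lassoc \<circ>\<^sub>L (\<alpha> \<otimes>\<^sub>L lid) \<circ>\<^sub>L \<gamma> = (lid \<otimes>\<^sub>L \<gamma>) \<circ>\<^sub>L \<Delta>A"
    and hg4a: "mZ \<circ>\<^sub>L (lid \<otimes>\<^sub>L S) \<circ>\<^sub>L \<gamma> = uZ \<circ>\<^sub>L \<epsilon>A"
    and hg4b: "mZ \<circ>\<^sub>L (S \<otimes>\<^sub>L lid) \<circ>\<^sub>L \<delta> = uZ \<circ>\<^sub>L \<epsilon>B"
  using system unfolding hopf_galois_system_def is_bialgebra_def is_algebra_def bicomodule_algebra_def
    left_comodule_def right_comodule_def alg_hom_def by auto

lemma \<Delta>A_counit_lpair: "lpair (\<Delta>A a) (\<lambda>(a1, a2). \<epsilon>A a2 () * H a1) = H a"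
  using arg_cong[OF \<Delta>A_counit, of "\<lambda>f. lpair (f a) (\<lambda>(a1, _). H a1)"]
  by (simp add: split_def mult.commute)

lemma \<alpha>_mult_lpair: "lpair (mZ (x, y)) (\<lambda>p. lpair (\<alpha> p) (\<lambda>(c, w). G c w)) =
   lpair (\<alpha> x) (\<lambda>(a1, x1). lpair (\<alpha> y) (\<lambda>(a2, y1).
     lpair (mA (a1, a2)) (\<lambda>c. lpair (mZ (x1, y1)) (\<lambda>w. G c w))))"
  using arg_cong[OF \<alpha>_mult, of "\<lambda>f. lpair (f (x, y)) (\<lambda>(c, w). G c w)"]
  by (simp add: split_def)

lemma \<alpha>_unit_lpair: "lpair (uZ ()) (\<lambda>p. lpair (\<alpha> p) (\<lambda>(c, w). G c w)) =
   lpair (uA ()) (\<lambda>c. lpair (uZ ()) (\<lambda>w. G c w))"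
  using arg_cong[OF \<alpha>_unit, of "\<lambda>f. lpair (f ()) (\<lambda>(c, w). G c w)"]
  by (simp add: split_def)

lemma \<alpha>_coassoc_lpair: "lpair (\<alpha> z) (\<lambda>(a1, z1). lpair (\<Delta>A a1) (\<lambda>(b1, b2). K b1 b2 z1)) =
   lpair (\<alpha> z) (\<lambda>(b1, z2). lpair (\<alpha> z2) (\<lambda>(b2, z1). K b1 b2 z1))"
  using arg_cong[OF \<alpha>_coassoc, of "\<lambda>f. lpair (f z) (\<lambda>(b1, b2, z1). K b1 b2 z1)"]
  by (simp add: split_def)

lemma \<beta>_counit_lpair: "lpair (\<beta> z) (\<lambda>(x, b). \<epsilon>B b () * L x) = L z"
  using arg_cong[OF \<beta>_counit, of "\<lambda>f. lpair (f z) (\<lambda>(x, _). L x)"]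
  by (simp add: split_def mult.commute)

lemma mZ_assoc_lpair: "lpair (mZ (x, y)) (\<lambda>p. lpair (mZ (p, w)) H) =
   lpair (mZ (y, w)) (\<lambda>q. lpair (mZ (x, q)) H)"
  using arg_cong[OF mZ_assoc, of "\<lambda>f. lpair (f ((x, y), w)) H"]
  by (simp add: split_def)

lemma uZ_right_lpair: "lpair (uZ ()) (\<lambda>w. lpair (mZ (x, w)) H) = H x"
  using arg_cong[OF uZ_right, of "\<lambda>f. lpair (f (x, ())) H"]
  by (simp add: split_def)

lemma hg3a_lpair: "lpair (\<alpha> z) (\<lambda>(b1, z2). lpair (\<gamma> b1) (\<lambda>(x, t). K x t z2)) =
   lpair (\<beta> z) (\<lambda>(x, b). lpair (\<delta> b) (\<lambda>(t, z2). K x t z2))"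
  using arg_cong[OF hg3a, of "\<lambda>f. lpair (f z) (\<lambda>(x, t, z2). K x t z2)"]
  by (simp add: split_def)

lemma hg3b_lpair: "lpair (\<Delta>A a) (\<lambda>(a1, a2). lpair (\<gamma> a2) (\<lambda>(z, t). H a1 z t)) =
   lpair (\<gamma> a) (\<lambda>(z, t). lpair (\<alpha> z) (\<lambda>(a1, z1). H a1 z1 t))"
  using arg_cong[OF hg3b, of "\<lambda>f. lpair (f a) (\<lambda>(a1, z, t). H a1 z t)"]
  by (simp add: split_def)

lemma hg4a_lpair: "lpair (\<gamma> a) (\<lambda>(z, t). lpair (S t) (\<lambda>z'. lpair (mZ (z, z')) G)) =
   \<epsilon>A a () * lpair (uZ ()) G"
  using arg_cong[OF hg4a, of "\<lambda>f. lpair (f a) G"]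
  by (simp add: split_def)

lemma hg4b_lpair: "lpair (\<delta> b) (\<lambda>(t, z). lpair (S t) (\<lambda>z'. lpair (mZ (z', z)) G)) =
   \<epsilon>B b () * lpair (uZ ()) G"
  using arg_cong[OF hg4b, of "\<lambda>f. lpair (f b) G"]
  by (simp add: split_def)

definition \<phi> :: "'z \<Rightarrow> 'k" where
  "\<phi> = (SOME \<phi>. lpair (uZ ()) \<phi> = 1)"

lemma \<phi>_unit: "lpair (uZ ()) (\<lambda>w. \<phi> w * c) = c"
proof -
  have "nonzero_algebra uZ" using system unfolding hopf_galois_system_def by simp
  then have "\<exists>\<phi>. lpair (uZ ()) \<phi> = 1"
    by (intro exists_functional_one) simp_all
  then have "lpair (uZ ()) \<phi> = 1"
    unfolding \<phi>_def by (rule someI_ex)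
  then show ?thesis by (simp add: lpair_multc)
qed

definition antipode :: "'a \<Rightarrow> 'a \<Rightarrow> 'k" where
  "antipode = runitor \<circ>\<^sub>L (lid \<otimes>\<^sub>L (\<lambda>z _. \<phi> z)) \<circ>\<^sub>L (lid \<otimes>\<^sub>L mZ) \<circ>\<^sub>L lbasis (\<lambda>(z, a, w). (a, z, w))
     \<circ>\<^sub>L (lid \<otimes>\<^sub>L \<alpha>) \<circ>\<^sub>L (lid \<otimes>\<^sub>L S) \<circ>\<^sub>L \<gamma>"

lemma lmap_antipode [simp]: "lmap antipode"
  unfolding antipode_def by simp

lemma lpair_antipode: "lpair (antipode a) F = lpair (\<gamma> a) (\<lambda>(z, t). lpair (S t) (\<lambda>s.
    lpair (\<alpha> s) (\<lambda>(a', w'). lpair (mZ (z, w')) (\<lambda>w. \<phi> w * F a'))))"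
  unfolding antipode_def by (simp add: split_def mult.commute)

lemma antipode_right: "mA \<circ>\<^sub>L (lid \<otimes>\<^sub>L antipode) \<circ>\<^sub>L \<Delta>A = uA \<circ>\<^sub>L \<epsilon>A"
proof (rule lmap_eqI)
  fix a F
  have "lpair ((mA \<circ>\<^sub>L (lid \<otimes>\<^sub>L antipode) \<circ>\<^sub>L \<Delta>A) a) F
     = lpair (\<Delta>A a) (\<lambda>(a1, a2). lpair (\<gamma> a2) (\<lambda>(z, t). lpair (S t) (\<lambda>s. lpair (\<alpha> s) (\<lambda>(a', w').
         lpair (mZ (z, w')) (\<lambda>w. \<phi> w * lpair (mA (a1, a')) F)))))"
    by (simp add: lpair_antipode split_def)
  also have "\<dots> = lpair (\<gamma> a) (\<lambda>(z, t). lpair (\<alpha> z) (\<lambda>(a1, z1). lpair (S t) (\<lambda>s. lpair (\<alpha> s) (\<lambda>(a', w').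
         lpair (mZ (z1, w')) (\<lambda>w. \<phi> w * lpair (mA (a1, a')) F)))))"
    by (rule hg3b_lpair)
  also have "\<dots> = lpair (\<gamma> a) (\<lambda>(z, t). lpair (S t) (\<lambda>s. lpair (\<alpha> z) (\<lambda>(a1, z1). lpair (\<alpha> s) (\<lambda>(a', w').
         lpair (mA (a1, a')) (\<lambda>c. lpair (mZ (z1, w')) (\<lambda>w. \<phi> w * F c))))))"
    by (simp add: split_def lpair_swap[of "\<alpha> _" "S _"] lpair_swap[of "mZ _" "mA _"] lpair_cmult[symmetric])
  also have "\<dots> = lpair (\<gamma> a) (\<lambda>(z, t). lpair (S t) (\<lambda>s. lpair (mZ (z, s)) (\<lambda>p.
         lpair (\<alpha> p) (\<lambda>(c, w). \<phi> w * F c))))"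
    by (simp add: \<alpha>_mult_lpair)
  also have "\<dots> = \<epsilon>A a () * lpair (uZ ()) (\<lambda>p. lpair (\<alpha> p) (\<lambda>(c, w). \<phi> w * F c))"
    by (rule hg4a_lpair)
  also have "\<dots> = lpair ((uA \<circ>\<^sub>L \<epsilon>A) a) F"
    by (simp add: \<alpha>_unit_lpair \<phi>_unit)
  finally show "lpair ((mA \<circ>\<^sub>L (lid \<otimes>\<^sub>L antipode) \<circ>\<^sub>L \<Delta>A) a) F = lpair ((uA \<circ>\<^sub>L \<epsilon>A) a) F" .
qed simp_all

lemma coaction_gamma_S: "lpair (\<gamma> a) (\<lambda>(z, t). lpair (\<alpha> z) (\<lambda>(a1, z1). lpair (S t) (\<lambda>s.
    lpair (mZ (z1, s)) (\<lambda>y. H a1 y)))) = lpair (uZ ()) (\<lambda>y. H a y)"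
proof -
  have "lpair (\<gamma> a) (\<lambda>(z, t). lpair (\<alpha> z) (\<lambda>(a1, z1). lpair (S t) (\<lambda>s.
      lpair (mZ (z1, s)) (\<lambda>y. H a1 y))))
     = lpair (\<Delta>A a) (\<lambda>(a1, a2). lpair (\<gamma> a2) (\<lambda>(z, t). lpair (S t) (\<lambda>s.
      lpair (mZ (z, s)) (\<lambda>y. H a1 y))))"
    by (rule hg3b_lpair[symmetric])
  also have "\<dots> = lpair (\<Delta>A a) (\<lambda>(a1, a2). \<epsilon>A a2 () * lpair (uZ ()) (\<lambda>y. H a1 y))"
    by (simp add: hg4a_lpair)
  also have "\<dots> = lpair (uZ ()) (\<lambda>y. H a y)"
    by (rule \<Delta>A_counit_lpair)
  finally show ?thesis .
qed

lemma gamma_S_coaction: "lpair (\<alpha> z) (\<lambda>(b1, z2). lpair (\<gamma> b1) (\<lambda>(x, t). lpair (S t) (\<lambda>s.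
    lpair (mZ (s, z2)) (\<lambda>p. H x p)))) = lpair (uZ ()) (\<lambda>p. H z p)"
proof -
  have "lpair (\<alpha> z) (\<lambda>(b1, z2). lpair (\<gamma> b1) (\<lambda>(x, t). lpair (S t) (\<lambda>s.
      lpair (mZ (s, z2)) (\<lambda>p. H x p))))
    = lpair (\<beta> z) (\<lambda>(x, b). lpair (\<delta> b) (\<lambda>(t, z2). lpair (S t) (\<lambda>s.
      lpair (mZ (s, z2)) (\<lambda>p. H x p))))"
    by (rule hg3a_lpair)
  also have "\<dots> = lpair (\<beta> z) (\<lambda>(x, b). \<epsilon>B b () * lpair (uZ ()) (\<lambda>p. H x p))"
    by (simp add: hg4b_lpair)
  also have "\<dots> = lpair (uZ ()) (\<lambda>p. H z p)"
    by (rule \<beta>_counit_lpair)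
  finally show ?thesis .
qed

(* Paired with K: the element a(1)[1] S(a(1)[2])(0) (x) S(a(1)[2])(-1) a(2) of Z (x) A, whose image
   under phi (x) id is antipode(a(1)) a(2). *)
definition convolution_lift :: "('z \<Rightarrow> 'a \<Rightarrow> 'k) \<Rightarrow> 'a \<Rightarrow> 'k" where
  "convolution_lift K a = lpair (\<Delta>A a) (\<lambda>(a1, a2). lpair (\<gamma> a1) (\<lambda>(x, t). lpair (S t) (\<lambda>s.
     lpair (\<alpha> s) (\<lambda>(a', w'). lpair (mZ (x, w')) (\<lambda>x'. lpair (mA (a', a2)) (\<lambda>c. K x' c))))))"

lemma convolution_lift_lpair:
  "lpair v (\<lambda>y. convolution_lift (K y) a) = convolution_lift (\<lambda>x' c. lpair v (\<lambda>y. K y x' c)) a"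
  unfolding convolution_lift_def by (simp add: split_def lpair_swap[of v])

lemma convolution_lift_coaction:
  "lpair (\<alpha> z) (\<lambda>(a1, z1). convolution_lift (\<lambda>x' c. lpair (mZ (x', z1)) (\<lambda>y. F c y)) a1)
   = lpair (uA ()) (\<lambda>c. F c z)"
proof -
  have "lpair (\<alpha> z) (\<lambda>(a1, z1). convolution_lift (\<lambda>x' c. lpair (mZ (x', z1)) (\<lambda>y. F c y)) a1)
    = lpair (\<alpha> z) (\<lambda>(a1, z1). lpair (\<Delta>A a1) (\<lambda>(b1, b2). lpair (\<gamma> b1) (\<lambda>(x, t). lpair (S t) (\<lambda>s.
        lpair (\<alpha> s) (\<lambda>(a', w'). lpair (mZ (x, w')) (\<lambda>x'. lpair (mA (a', b2)) (\<lambda>c.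
        lpair (mZ (x', z1)) (\<lambda>y. F c y))))))))"
    unfolding convolution_lift_def ..
  also have "\<dots> = lpair (\<alpha> z) (\<lambda>(b1, z2). lpair (\<alpha> z2) (\<lambda>(b2, z1). lpair (\<gamma> b1) (\<lambda>(x, t). lpair (S t) (\<lambda>s.
        lpair (\<alpha> s) (\<lambda>(a', w'). lpair (mZ (x, w')) (\<lambda>x'. lpair (mA (a', b2)) (\<lambda>c.
        lpair (mZ (x', z1)) (\<lambda>y. F c y))))))))"
    by (rule \<alpha>_coassoc_lpair)
  also have "\<dots> = lpair (\<alpha> z) (\<lambda>(b1, z2). lpair (\<gamma> b1) (\<lambda>(x, t). lpair (S t) (\<lambda>s.
        lpair (\<alpha> s) (\<lambda>(a', w'). lpair (\<alpha> z2) (\<lambda>(b2, z1). lpair (mA (a', b2)) (\<lambda>c.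
        lpair (mZ (w', z1)) (\<lambda>y'. lpair (mZ (x, y')) (\<lambda>y. F c y))))))))"
  proof -
    have "lpair (\<alpha> z2) (\<lambda>(b2, z1). lpair (\<alpha> s) (\<lambda>(a', w'). lpair (mZ (x, w')) (\<lambda>x'.
        lpair (mA (a', b2)) (\<lambda>c. lpair (mZ (x', z1)) (\<lambda>y. F c y)))))
      = lpair (\<alpha> s) (\<lambda>(a', w'). lpair (\<alpha> z2) (\<lambda>(b2, z1). lpair (mA (a', b2)) (\<lambda>c.
        lpair (mZ (w', z1)) (\<lambda>y'. lpair (mZ (x, y')) (\<lambda>y. F c y)))))" for z2 s x
      by (simp add: split_def lpair_swap[of "\<alpha> z2" "\<alpha> s"] lpair_swap[of "mZ _" "mA _"] mZ_assoc_lpair)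
    then show ?thesis
      by (simp add: split_def lpair_swap[of "\<alpha> _" "\<gamma> _"] lpair_swap[of "\<alpha> _" "S _"])
  qed
  also have "\<dots> = lpair (\<alpha> z) (\<lambda>(b1, z2). lpair (\<gamma> b1) (\<lambda>(x, t). lpair (S t) (\<lambda>s.
        lpair (mZ (s, z2)) (\<lambda>p. lpair (\<alpha> p) (\<lambda>(c, y'). lpair (mZ (x, y')) (\<lambda>y. F c y))))))"
    by (simp add: \<alpha>_mult_lpair)
  also have "\<dots> = lpair (uZ ()) (\<lambda>p. lpair (\<alpha> p) (\<lambda>(c, y'). lpair (mZ (z, y')) (\<lambda>y. F c y)))"
    by (rule gamma_S_coaction)
  also have "\<dots> = lpair (uA ()) (\<lambda>c. F c z)"
    by (simp add: \<alpha>_unit_lpair uZ_right_lpair)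
  finally show ?thesis .
qed

lemma convolution_lift_eq:
  "convolution_lift K a = \<epsilon>A a () * lpair (uA ()) (\<lambda>c. lpair (uZ ()) (\<lambda>y. K y c))"
proof -
  have "convolution_lift K a
    = lpair (uZ ()) (\<lambda>w. convolution_lift (\<lambda>x' c. lpair (mZ (x', w)) (\<lambda>y. K y c)) a)"
    by (simp add: convolution_lift_lpair uZ_right_lpair)
  also have "\<dots> = lpair (\<gamma> a) (\<lambda>(z, t). lpair (\<alpha> z) (\<lambda>(a1, z1). lpair (S t) (\<lambda>s.
      lpair (mZ (z1, s)) (\<lambda>y. convolution_lift (\<lambda>x' c. lpair (mZ (x', y)) (\<lambda>r. K r c)) a1))))"
    by (rule coaction_gamma_S[symmetric])
  also have "\<dots> = lpair (\<gamma> a) (\<lambda>(z, t). lpair (\<alpha> z) (\<lambda>(a1, z1). lpair (S t) (\<lambda>s.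
      convolution_lift (\<lambda>x' c. lpair (mZ (x', z1)) (\<lambda>p. lpair (mZ (p, s)) (\<lambda>r. K r c))) a1)))"
    by (simp add: convolution_lift_lpair mZ_assoc_lpair)
  also have "\<dots> = lpair (\<gamma> a) (\<lambda>(z, t). lpair (S t) (\<lambda>s. lpair (\<alpha> z) (\<lambda>(a1, z1).
      convolution_lift (\<lambda>x' c. lpair (mZ (x', z1)) (\<lambda>p. lpair (mZ (p, s)) (\<lambda>r. K r c))) a1)))"
    by (simp add: split_def lpair_swap[of "\<alpha> _" "S _"])
  also have "\<dots> = lpair (\<gamma> a) (\<lambda>(z, t). lpair (S t) (\<lambda>s. lpair (uA ()) (\<lambda>c.
      lpair (mZ (z, s)) (\<lambda>r. K r c))))"
    by (simp add: convolution_lift_coaction)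
  also have "\<dots> = lpair (uA ()) (\<lambda>c. lpair (\<gamma> a) (\<lambda>(z, t). lpair (S t) (\<lambda>s.
      lpair (mZ (z, s)) (\<lambda>r. K r c))))"
    by (simp add: split_def lpair_swap[of "\<gamma> _" "uA ()"] lpair_swap[of "S _" "uA ()"])
  also have "\<dots> = \<epsilon>A a () * lpair (uA ()) (\<lambda>c. lpair (uZ ()) (\<lambda>y. K y c))"
    by (simp add: hg4a_lpair lpair_cmult)
  finally show ?thesis .
qed

lemma antipode_left: "mA \<circ>\<^sub>L (antipode \<otimes>\<^sub>L lid) \<circ>\<^sub>L \<Delta>A = uA \<circ>\<^sub>L \<epsilon>A"
proof (rule lmap_eqI)
  fix a F
  have "lpair ((mA \<circ>\<^sub>L (antipode \<otimes>\<^sub>L lid) \<circ>\<^sub>L \<Delta>A) a) F = convolution_lift (\<lambda>x' c. \<phi> x' * F c) a"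
    unfolding convolution_lift_def
    by (simp add: lpair_antipode split_def lpair_swap[of "mZ _" "mA _"] lpair_cmult[symmetric])
  also have "\<dots> = lpair ((uA \<circ>\<^sub>L \<epsilon>A) a) F"
    by (simp add: convolution_lift_eq \<phi>_unit)
  finally show "lpair ((mA \<circ>\<^sub>L (antipode \<otimes>\<^sub>L lid) \<circ>\<^sub>L \<Delta>A) a) F = lpair ((uA \<circ>\<^sub>L \<epsilon>A) a) F" .
qed simp_all

lemma is_antipode: "is_antipode mA uA \<Delta>A \<epsilon>A antipode"
  unfolding is_antipode_def using antipode_left antipode_right by simp

lemma is_hopf_algebra_left: "is_hopf_algebra mA uA \<Delta>A \<epsilon>A"
  using system is_antipode unfolding is_hopf_algebra_def hopf_galois_system_def by blast

end

theorem corollary1p3: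
  fixes mA :: "'a \<times> 'a \<Rightarrow> 'a \<Rightarrow> 'k::field" and uA :: "unit \<Rightarrow> 'a \<Rightarrow> 'k"
    and \<Delta>A :: "'a \<Rightarrow> 'a \<times> 'a \<Rightarrow> 'k" and \<epsilon>A :: "'a \<Rightarrow> unit \<Rightarrow> 'k"
    and mB :: "'b \<times> 'b \<Rightarrow> 'b \<Rightarrow> 'k" and uB :: "unit \<Rightarrow> 'b \<Rightarrow> 'k"
    and \<Delta>B :: "'b \<Rightarrow> 'b \<times> 'b \<Rightarrow> 'k" and \<epsilon>B :: "'b \<Rightarrow> unit \<Rightarrow> 'k"
    and mZ :: "'z \<times> 'z \<Rightarrow> 'z \<Rightarrow> 'k" and uZ :: "unit \<Rightarrow> 'z \<Rightarrow> 'k"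
    and mT :: "'t \<times> 't \<Rightarrow> 't \<Rightarrow> 'k" and uT :: "unit \<Rightarrow> 't \<Rightarrow> 'k"
    and \<alpha> :: "'z \<Rightarrow> 'a \<times> 'z \<Rightarrow> 'k" and \<beta> :: "'z \<Rightarrow> 'z \<times> 'b \<Rightarrow> 'k"
    and \<gamma> :: "'a \<Rightarrow> 'z \<times> 't \<Rightarrow> 'k" and \<delta> :: "'b \<Rightarrow> 't \<times> 'z \<Rightarrow> 'k"
    and S :: "'t \<Rightarrow> 'z \<Rightarrow> 'k"
  assumes "hopf_galois_system mA uA \<Delta>A \<epsilon>A mB uB \<Delta>B \<epsilon>B mZ uZ mT uT \<alpha> \<beta> \<gamma> \<delta> S"
  shows "is_hopf_algebra mA uA \<Delta>A \<epsilon>A \<and> is_hopf_algebra mB uB \<Delta>B \<epsilon>B"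
proof
  show "is_hopf_algebra mA uA \<Delta>A \<epsilon>A"
    using assms by (rule hopf_galois.is_hopf_algebra_left[OF hopf_galois.intro])
  have "is_hopf_algebra (mB \<circ>\<^sub>L lswap) uB (lswap \<circ>\<^sub>L \<Delta>B) \<epsilon>B"
    using hopf_galois_system_mirror[OF assms] by (rule hopf_galois.is_hopf_algebra_left[OF hopf_galois.intro])
  moreover have "is_bialgebra mB uB \<Delta>B \<epsilon>B"
    using assms unfolding hopf_galois_system_def by simp
  ultimately show "is_hopf_algebra mB uB \<Delta>B \<epsilon>B"
    using is_hopf_algebra_op_cop by blast
qed

end
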